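(* Let $M\subset\mathbb{R}^{2d}$ satisfy the standing assumptions below. There exist constants $C,\delta>0$, depending only on $M$, such that for all $x$ with $|x|\ge\frac1\delta$, writing $y=T(x)$, one has $$|n_-(x)-m_-(x)|\le\frac{C}{|x|},\qquad |m_-(y)-n_-(y)|\le\frac{C}{|x|},\qquad |n_-(y)-n_+(x)|\le\frac{C}{|x|}.$$
   Context: $\mathbb{R}^{2d}$ carries its standard inner product, norm $|\cdot|$, complex structure $J$ and symplectic form $\omega(u,v)=\langle Ju,v\rangle$. Standing assumptions: $M$ is a smooth closed hypersurface bounding a strictly convex domain containing the origin in its interior, and $M$ is a level set of a smooth function with positive definite Hessian. For $q\in M$ the Reeb vector $R(q)$ is the unique vector with $\omega(v,R(q))=0$ for all $v\in T_qM$ and $\omega(q,R(q))=1$. Write $a\sim b$ if $a=\lambda b$, $\lambda>0$. For $x$ in the exterior of $M$: $m_-(x)\in M$ is the unique point with $m_-(x)-x\sim R(m_-(x))$; $T(x)=2m_-(x)-x$ is the outer symplectic billiard map; $n_+(x),n_-(x)\in M$ are the unique points with $R(n_+(x))\sim x$ and $R(n_-(x))\sim -x$. *)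

theory Defs
  imports "HOL-Analysis.Analysis"
begin

text \<open>The space R^{2d} is modelled as real^'n \<times> real^'n (d = CARD('n)), with
  the product inner product; points are (q, p).\<close>

type_synonym 'n sp = "(real^'n) \<times> (real^'n)"

definition cJ :: "'n::finite sp \<Rightarrow> 'n sp" where
  "cJ z = (- snd z, fst z)"

definition omega :: "'n::finite sp \<Rightarrow> 'n sp \<Rightarrow> real" where
  "omega u v = inner (cJ u) v"

fun Ck :: "nat \<Rightarrow> ('a::euclidean_space \<Rightarrow> real) \<Rightarrow> bool" where
  "Ck 0 f = continuous_on UNIV f"
| "Ck (Suc k) f = (continuous_on UNIV f \<and> (\<forall>x. f differentiable (at x)) \<and>
      (\<forall>v. Ck k (\<lambda>x. frechet_derivative f (at x) v)))"

definition smooth :: "('a::euclidean_space \<Rightarrow> real) \<Rightarrow> bool" where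
  "smooth f = (\<forall>k. Ck k f)"

definition pos_def_hessian :: "('a::euclidean_space \<Rightarrow> real) \<Rightarrow> bool" where
  "pos_def_hessian F = (\<forall>x h. h \<noteq> 0 \<longrightarrow>
      frechet_derivative (\<lambda>y. frechet_derivative F (at y) h) (at x) h > 0)"

definition tangent_space :: "('n::finite sp \<Rightarrow> real) \<Rightarrow> 'n sp \<Rightarrow> 'n sp set" where
  "tangent_space F q = {v. frechet_derivative F (at q) v = 0}"

definition reeb :: "('n::finite sp \<Rightarrow> real) \<Rightarrow> 'n sp \<Rightarrow> 'n sp" where
  "reeb F q = (THE r. (\<forall>v\<in>tangent_space F q. omega v r = 0) \<and> omega q r = 1)"

definition pos_parallel :: "'n::finite sp \<Rightarrow> 'n sp \<Rightarrow> bool" where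
  "pos_parallel a b = (\<exists>l>0. a = l *\<^sub>R b)"

definition m_minus :: "('n::finite sp \<Rightarrow> real) \<Rightarrow> 'n sp set \<Rightarrow> 'n sp \<Rightarrow> 'n sp" where
  "m_minus F M x = (THE m. m \<in> M \<and> pos_parallel (m - x) (reeb F m))"

definition Tbil :: "('n::finite sp \<Rightarrow> real) \<Rightarrow> 'n sp set \<Rightarrow> 'n sp \<Rightarrow> 'n sp" where
  "Tbil F M x = 2 *\<^sub>R m_minus F M x - x"

definition n_plus :: "('n::finite sp \<Rightarrow> real) \<Rightarrow> 'n sp set \<Rightarrow> 'n sp \<Rightarrow> 'n sp" where
  "n_plus F M x = (THE n. n \<in> M \<and> pos_parallel (reeb F n) x)"

definition n_minus :: "('n::finite sp \<Rightarrow> real) \<Rightarrow> 'n sp set \<Rightarrow> 'n sp \<Rightarrow> 'n sp" where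
  "n_minus F M x = (THE n. n \<in> M \<and> pos_parallel (reeb F n) (- x))"

end

theory Submission
  imports Defs
begin

(* By the formula R(q) = J (grad F q) / <q, grad F q> for the Reeb vector, each of n_-(x), n_+(x)
   and m = m_-(x) is the point of M at which the outer normal points in a prescribed direction,
   namely J x, -J x and J (x - m).  Since the Hessian of F is uniformly positive on K, the gradient
   is strongly monotone there, which makes this inverse Gauss map N Lipschitz in the direction:
   |N u - N v| <= L |u - v| / |v|.  Hence for large |x| the map z |-> N (J (x - z)) is a
   contraction of K whose fixed point is m_-(x), and each of the three distances compares N at two
   vectors of size about |x| that differ by the bounded vectors J m, J m_-(y) or 2 J m, using
   |y| >= |x| / 2 for y = T x. *)

lemma norm_sgn_diff_le:
  fixes a b :: "'a::real_normed_vector"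
  assumes "b \<noteq> 0"
  shows "norm (sgn a - sgn b) \<le> 2 * norm (a - b) / norm b"
proof -
  have nb: "norm b > 0" using assms by simp
  have "norm (sgn a - a /\<^sub>R norm b) \<le> norm (a - b) / norm b"
  proof (cases "a = 0")
    case False
    have "sgn a - a /\<^sub>R norm b = (1 / norm a - 1 / norm b) *\<^sub>R a"
      by (simp add: sgn_div_norm scaleR_diff_left divide_inverse_commute)
    also have "1 / norm a - 1 / norm b = (norm b - norm a) / (norm a * norm b)"
      using False nb by (simp add: field_simps)
    finally have "norm (sgn a - a /\<^sub>R norm b) = \<bar>norm b - norm a\<bar> / norm b"
      using False by simp
    also have "\<dots> \<le> norm (a - b) / norm b"
      using nb by (simp add: divide_right_mono norm_triangle_ineq3 abs_minus_commute)
    finally show ?thesis .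
  qed simp
  moreover have "norm (a /\<^sub>R norm b - sgn b) = norm (a - b) / norm b"
    using nb by (simp add: sgn_div_norm divide_inverse_commute flip: scaleR_diff_right)
  ultimately show ?thesis
    using norm_triangle_ineq[of "sgn a - a /\<^sub>R norm b" "a /\<^sub>R norm b - sgn b"] by simp
qed

lemma scaleR_norm_sgn: "norm x *\<^sub>R sgn x = (x::'a::real_normed_vector)"
  by (cases "x = 0") (simp_all add: sgn_div_norm)

lemma inner_lt_1_if_unit_neq:
  fixes x y :: "'a::real_inner"
  assumes "norm x = 1" "norm y = 1" "x \<noteq> y"
  shows "x \<bullet> y < 1"
proof -
  have "0 < (norm (x - y))\<^sup>2"
    using assms(3) by simp
  also have "(norm (x - y))\<^sup>2 = (norm x)\<^sup>2 + (norm y)\<^sup>2 - 2 * (x \<bullet> y)"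
    by (simp add: power2_norm_eq_inner inner_diff inner_commute)
  finally show ?thesis
    using assms(1,2) by simp
qed

lemma has_real_derivative_along_line:
  assumes "\<And>y. (f has_derivative f' y) (at y)"
  shows "((\<lambda>t. f (z + t *\<^sub>R w)) has_real_derivative f' (z + t *\<^sub>R w) w) (at t)"
proof -
  have "((\<lambda>t. f (z + t *\<^sub>R w)) has_derivative (\<lambda>s. f' (z + t *\<^sub>R w) (s *\<^sub>R w))) (at t)"
    by (rule has_derivative_compose[OF _ assms]) (auto intro!: derivative_eq_intros)
  moreover have "(\<lambda>s. f' (z + t *\<^sub>R w) (s *\<^sub>R w)) = (*) (f' (z + t *\<^sub>R w) w)"
    using has_derivative_linear[OF assms] by (auto simp: linear_scale)
  ultimately show ?thesis by (simp add: has_field_derivative_def)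
qed

lemma linear_real_eq_sum_Basis:
  fixes f :: "'a::euclidean_space \<Rightarrow> real"
  assumes "linear f"
  shows "f x = (\<Sum>i\<in>Basis. (x \<bullet> i) * f i)"
  using Linear_Algebra.linear_componentwise[OF assms, of x 1] by simp

locale convex_level_set =
  fixes F :: "'a::euclidean_space \<Rightarrow> real" and c :: real and M K :: "'a set"
  assumes smooth: "smooth F"
    and hessian_pos: "pos_def_hessian F"
    and M_eq: "M = {z. F z = c}"
    and K_eq: "K = {z. F z \<le> c}"
    and compact_K: "compact K" and convex_K: "convex K" and zero_interior_K: "0 \<in> interior K"
    and M_frontier: "M = frontier K"
begin

definition DF :: "'a \<Rightarrow> 'a \<Rightarrow> real" where
  "DF y = frechet_derivative F (at y)"

definition D2F :: "'a \<Rightarrow> 'a \<Rightarrow> 'a \<Rightarrow> real" where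
  "D2F y h = frechet_derivative (\<lambda>z. DF z h) (at y)"

definition grad :: "'a \<Rightarrow> 'a" where
  "grad y = (\<Sum>b\<in>Basis. DF y b *\<^sub>R b)"

lemma zero_in_K: "0 \<in> K"
  using zero_interior_K interior_subset by blast

lemma M_subset_K: "M \<subseteq> K"
  using M_frontier compact_K by (simp add: frontier_subset_compact)

lemma F_on_M: "q \<in> M \<Longrightarrow> F q = c"
  using M_eq by blast

lemma F_C2:
  "(\<forall>y. F differentiable (at y)) \<and>
   (\<forall>h. (\<forall>y. (\<lambda>z. DF z h) differentiable (at y)) \<and> continuous_on UNIV (\<lambda>y. DF y h) \<and>
        (\<forall>w. continuous_on UNIV (\<lambda>y. D2F y h w)))"
proof -
  have "Ck 3 F" using smooth unfolding smooth_def by blast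
  then show ?thesis unfolding DF_def D2F_def numeral_3_eq_3 by simp
qed

lemma has_derivative_DF: "(F has_derivative DF y) (at y)"
  using F_C2 frechet_derivative_works unfolding DF_def by blast

lemma has_derivative_D2F: "((\<lambda>z. DF z h) has_derivative D2F y h) (at y)"
  using F_C2 frechet_derivative_works unfolding D2F_def by blast

lemma linear_DF: "linear (DF y)"
  using has_derivative_DF by (rule has_derivative_linear)

lemma linear_D2F: "linear (D2F y h)"
  using has_derivative_D2F by (rule has_derivative_linear)

lemma DF_eq_inner_grad: "DF y v = grad y \<bullet> v"
  using linear_real_eq_sum_Basis[OF linear_DF, of y v]
  unfolding grad_def inner_sum_left by (simp add: inner_commute mult.commute)

lemma continuous_on_grad: "continuous_on UNIV grad"
  using F_C2 unfolding grad_def by (intro continuous_intros) blast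

lemma D2F_expansion: "D2F z h w = (\<Sum>i\<in>Basis. \<Sum>j\<in>Basis. (h \<bullet> i) * (w \<bullet> j) * D2F z i j)"
proof -
  have DF_h: "(\<lambda>y. DF y h) = (\<lambda>y. \<Sum>i\<in>Basis. (h \<bullet> i) * DF y i)"
    using linear_real_eq_sum_Basis[OF linear_DF] by blast
  have "((\<lambda>y. \<Sum>i\<in>Basis. (h \<bullet> i) * DF y i) has_derivative
      (\<lambda>w. \<Sum>i\<in>Basis. (h \<bullet> i) * D2F z i w)) (at z)"
    by (intro has_derivative_sum has_derivative_mult_right has_derivative_D2F)
  then have "D2F z h w = (\<Sum>i\<in>Basis. (h \<bullet> i) * D2F z i w)"
    unfolding D2F_def DF_h by (simp add: frechet_derivative_at[symmetric])
  also have "\<dots> = (\<Sum>i\<in>Basis. (h \<bullet> i) * (\<Sum>j\<in>Basis. (w \<bullet> j) * D2F z i j))"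
    using linear_real_eq_sum_Basis[OF linear_D2F, symmetric] by (simp only:)
  finally show ?thesis by (simp add: sum_distrib_left mult.assoc)
qed

lemma D2F_scaleR: "D2F z (r *\<^sub>R h) (r *\<^sub>R h) = r\<^sup>2 * D2F z h h"
proof -
  have "D2F z (r *\<^sub>R h) (r *\<^sub>R h) = r\<^sup>2 * (\<Sum>i\<in>Basis. \<Sum>j\<in>Basis. (h \<bullet> i) * (h \<bullet> j) * D2F z i j)"
    by (subst D2F_expansion) (simp add: sum_distrib_left power2_eq_square mult_ac)
  then show ?thesis by (simp only: D2F_expansion[of z h h, symmetric])
qed

lemma continuous_on_hessian_form: "continuous_on UNIV (\<lambda>p. D2F (fst p) (snd p) (snd p))"
proof -
  have "continuous_on UNIV (\<lambda>y. D2F y i j)" for i j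
    using F_C2 by blast
  then have "continuous_on UNIV (\<lambda>p. D2F (fst p) i j)" for i j
    using continuous_on_compose2[OF _ continuous_on_fst[OF continuous_on_id]] by fastforce
  moreover have "(\<lambda>p. D2F (fst p) (snd p) (snd p)) =
      (\<lambda>p. \<Sum>i\<in>Basis. \<Sum>j\<in>Basis. (snd p \<bullet> i) * (snd p \<bullet> j) * D2F (fst p) i j)"
    by (rule ext) (rule D2F_expansion)
  ultimately show ?thesis
    by (simp only:) (intro continuous_intros)
qed

lemma hessian_coercive: "\<exists>\<kappa>>0. \<forall>z\<in>K. \<forall>h. \<kappa> * (norm h)\<^sup>2 \<le> D2F z h h"
proof -
  obtain e :: 'a where "e \<in> Basis"
    using nonempty_Basis by blast
  then have "norm e = 1"
    by simp
  with zero_in_K have "K \<times> sphere (0::'a) 1 \<noteq> {}"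
    by (metis SigmaI empty_iff mem_sphere_0)
  moreover have "continuous_on (K \<times> sphere 0 1) (\<lambda>p. D2F (fst p) (snd p) (snd p))"
    by (rule continuous_on_subset[OF continuous_on_hessian_form subset_UNIV])
  ultimately obtain p where p: "p \<in> K \<times> sphere 0 1"
    and p_min: "\<forall>q\<in>K \<times> sphere 0 1. D2F (fst p) (snd p) (snd p) \<le> D2F (fst q) (snd q) (snd q)"
    using continuous_attains_inf[OF compact_Times[OF compact_K compact_sphere]] by blast
  have "snd p \<noteq> 0"
    using p by auto
  then have "D2F (fst p) (snd p) (snd p) > 0"
    using hessian_pos unfolding pos_def_hessian_def D2F_def DF_def by blast
  moreover have "D2F (fst p) (snd p) (snd p) * (norm h)\<^sup>2 \<le> D2F z h h" if "z \<in> K" for z h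
  proof (cases "h = 0")
    case False
    then have "D2F (fst p) (snd p) (snd p) \<le> D2F z (sgn h) (sgn h)"
      using p_min that by (force simp: norm_sgn)
    also have "\<dots> = D2F z h h / (norm h)\<^sup>2"
      using D2F_scaleR[of z "1 / norm h" h] by (simp add: sgn_div_norm divide_inverse_commute power_inverse)
    finally show ?thesis using False by (simp add: pos_le_divide_eq)
  qed (simp add: linear_0[OF linear_D2F])
  ultimately show ?thesis by blast
qed

lemma segment_in_K:
  "z1 \<in> K \<Longrightarrow> z2 \<in> K \<Longrightarrow> 0 \<le> t \<Longrightarrow> t \<le> 1 \<Longrightarrow> z1 + t *\<^sub>R (z2 - z1) \<in> K"
  using convexD[OF convex_K, of z1 z2 "1 - t" t] by (simp add: algebra_simps)

lemma grad_strongly_monotone: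
  assumes "\<forall>z\<in>K. \<forall>h. \<kappa> * (norm h)\<^sup>2 \<le> D2F z h h" and "z1 \<in> K" "z2 \<in> K"
  shows "\<kappa> * (norm (z2 - z1))\<^sup>2 \<le> (grad z2 - grad z1) \<bullet> (z2 - z1)"
proof -
  define d where "d = z2 - z1"
  obtain \<xi> where "0 < \<xi>" "\<xi> < 1"
    and "DF (z1 + 1 *\<^sub>R d) d - DF (z1 + 0 *\<^sub>R d) d = (1 - 0) * D2F (z1 + \<xi> *\<^sub>R d) d d"
    using MVT2[OF _ has_real_derivative_along_line[OF has_derivative_D2F], of 0 1 z1 d] by auto
  moreover have "z1 + \<xi> *\<^sub>R d \<in> K"
    using segment_in_K[OF assms(2,3)] \<open>0 < \<xi>\<close> \<open>\<xi> < 1\<close> by (simp add: d_def)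
  with assms(1) have "\<kappa> * (norm d)\<^sup>2 \<le> D2F (z1 + \<xi> *\<^sub>R d) d d"
    by blast
  ultimately show ?thesis
    by (simp add: DF_eq_inner_grad d_def inner_diff_left)
qed

lemma gradient_inequality:
  assumes "z \<in> K" "y \<in> K"
  shows "F y + grad y \<bullet> (z - y) \<le> F z"
proof -
  define d where "d = z - y"
  obtain \<xi> where \<xi>: "0 < \<xi>" "\<xi> < 1"
    and MVT: "F (y + 1 *\<^sub>R d) - F (y + 0 *\<^sub>R d) = (1 - 0) * DF (y + \<xi> *\<^sub>R d) d"
    using MVT2[OF _ has_real_derivative_along_line[OF has_derivative_DF], of 0 1 y d] by auto
  obtain \<kappa> where "\<kappa> > 0" and \<kappa>: "\<forall>z\<in>K. \<forall>h. \<kappa> * (norm h)\<^sup>2 \<le> D2F z h h"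
    using hessian_coercive by blast
  have "y + \<xi> *\<^sub>R d \<in> K"
    using segment_in_K[OF assms(2,1)] \<xi> by (simp add: d_def)
  from grad_strongly_monotone[OF \<kappa> assms(2) this]
  have "\<kappa> * (norm (\<xi> *\<^sub>R d))\<^sup>2 \<le> \<xi> * ((grad (y + \<xi> *\<^sub>R d) - grad y) \<bullet> d)"
    by simp
  then have "0 \<le> \<xi> * ((grad (y + \<xi> *\<^sub>R d) - grad y) \<bullet> d)"
    using \<open>\<kappa> > 0\<close> by (meson order_trans mult_nonneg_nonneg less_imp_le zero_le_power2)
  then have "grad y \<bullet> d \<le> grad (y + \<xi> *\<^sub>R d) \<bullet> d"
    using \<xi> by (simp add: zero_le_mult_iff inner_diff_left)
  with MVT show ?thesis by (simp add: DF_eq_inner_grad d_def)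
qed

lemma inner_grad_pos: "q \<in> M \<Longrightarrow> 0 < q \<bullet> grad q"
proof -
  assume q: "q \<in> M"
  have "0 \<notin> M"
    using zero_interior_K M_frontier by (simp add: frontier_def)
  then have "F 0 < c"
    using zero_in_K K_eq M_eq by auto
  moreover have "F q + grad q \<bullet> (0 - q) \<le> F 0"
    using gradient_inequality zero_in_K q M_subset_K by blast
  ultimately show ?thesis
    using F_on_M[OF q] by (simp add: inner_commute)
qed

lemma grad_nonzero: "q \<in> M \<Longrightarrow> grad q \<noteq> 0"
  using inner_grad_pos by fastforce

lemma grad_bounded: "\<exists>A>0. \<forall>q\<in>M. norm (grad q) \<le> A"
proof -
  have "compact (grad ` M)"
    using M_frontier compact_K
    by (intro compact_continuous_image continuous_on_subset[OF continuous_on_grad]) auto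
  then show ?thesis
    using compact_imp_bounded bounded_pos by (metis image_eqI)
qed

lemma normal_dist_le:
  assumes \<kappa>: "\<forall>z\<in>K. \<forall>h. \<kappa> * (norm h)\<^sup>2 \<le> D2F z h h"
    and A: "\<forall>q\<in>M. norm (grad q) \<le> A"
    and n1: "n1 \<in> M" and n2: "n2 \<in> M"
  shows "\<kappa> * norm (n1 - n2) \<le> A * norm (sgn (grad n1) - sgn (grad n2))"
proof -
  define d where "d = n1 - n2"
  define u1 u2 where "u1 = sgn (grad n1)" and "u2 = sgn (grad n2)"
  have "F n1 + grad n1 \<bullet> (n2 - n1) \<le> F n2" "F n2 + grad n2 \<bullet> (n1 - n2) \<le> F n1"
    using gradient_inequality n1 n2 M_subset_K by blast+
  then have "0 \<le> grad n1 \<bullet> d" "grad n2 \<bullet> d \<le> 0"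
    using F_on_M[OF n1] F_on_M[OF n2] unfolding d_def by (simp_all add: inner_diff_right)
  then have u1d: "0 \<le> u1 \<bullet> d" and u2d: "u2 \<bullet> d \<le> 0"
    by (simp_all add: u1_def u2_def sgn_div_norm mult_nonneg_nonpos)
  have "\<kappa> * (norm d)\<^sup>2 \<le> (grad n1 - grad n2) \<bullet> d"
    using grad_strongly_monotone[OF \<kappa>] n1 n2 M_subset_K unfolding d_def by blast
  also have "\<dots> = norm (grad n1) * (u1 \<bullet> d) - norm (grad n2) * (u2 \<bullet> d)"
    unfolding u1_def u2_def
    by (subst (1 2) scaleR_norm_sgn[symmetric]) (simp add: inner_diff_left)
  also have "\<dots> \<le> A * (u1 \<bullet> d) - A * (u2 \<bullet> d)"
    using A n1 n2 u1d u2d by (intro diff_mono mult_right_mono mult_right_mono_neg) auto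
  also have "\<dots> = A * ((u1 - u2) \<bullet> d)"
    by (simp add: inner_diff_left algebra_simps)
  also have "\<dots> \<le> A * (norm (u1 - u2) * norm d)"
    using A n1 norm_ge_zero order_trans
    by (intro mult_left_mono norm_cauchy_schwarz) blast+
  finally have "\<kappa> * norm d * norm d \<le> A * norm (u1 - u2) * norm d"
    by (simp add: power2_eq_square mult_ac)
  then show ?thesis
    by (cases "d = 0") (auto simp: d_def u1_def u2_def)
qed

lemma sgn_grad_inj:
  assumes "n1 \<in> M" "n2 \<in> M" "sgn (grad n1) = sgn (grad n2)"
  shows "n1 = n2"
proof -
  obtain \<kappa> where "\<kappa> > 0" and \<kappa>: "\<forall>z\<in>K. \<forall>h. \<kappa> * (norm h)\<^sup>2 \<le> D2F z h h"
    using hessian_coercive by blast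
  obtain A where A: "\<forall>q\<in>M. norm (grad q) \<le> A"
    using grad_bounded by blast
  show ?thesis
    using normal_dist_le[OF \<kappa> A assms(1,2)] assms(3) \<open>\<kappa> > 0\<close>
    by (simp add: mult_le_0_iff)
qed

lemma normal_point_exists:
  assumes "u \<noteq> 0"
  shows "\<exists>n\<in>M. sgn (grad n) = sgn u"
proof -
  have "continuous_on K (\<lambda>y. u \<bullet> y)"
    by (intro continuous_intros)
  then obtain z where "z \<in> K" and z_max: "\<forall>y\<in>K. u \<bullet> y \<le> u \<bullet> z"
    using continuous_attains_sup[OF compact_K] zero_in_K by blast
  have "z \<notin> interior K"
  proof
    assume "z \<in> interior K"
    then obtain e where "e > 0" "cball z e \<subseteq> K"
      using mem_interior_cball by blast
    then have "z + e *\<^sub>R sgn u \<in> K"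
      using assms by (auto simp: dist_norm norm_sgn)
    moreover have "u \<bullet> (z + e *\<^sub>R sgn u) = u \<bullet> z + e * norm u"
      using assms by (simp add: inner_add_right sgn_div_norm power2_norm_eq_inner[symmetric] power2_eq_square)
    ultimately have "e * norm u \<le> 0"
      using z_max by fastforce
    then show False
      using \<open>e > 0\<close> assms by (simp add: mult_le_0_iff)
  qed
  then have "z \<in> M"
    using \<open>z \<in> K\<close> M_frontier compact_K by (simp add: frontier_def compact_imp_closed closure_closed)
  have "sgn (grad z) = sgn u"
  proof (rule ccontr)
    assume "sgn (grad z) \<noteq> sgn u"
    define g where "g = grad z"
    define s v where "s = sgn g" and "v = sgn u"
    define w where "w = v - s"
    have "g \<noteq> 0"
      using grad_nonzero[OF \<open>z \<in> M\<close>] by (simp add: g_def)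
    then have "norm s = 1" "norm v = 1"
      using assms by (simp_all add: s_def v_def norm_sgn)
    then have "s \<bullet> s = 1" "v \<bullet> v = 1" "s \<bullet> v < 1"
      using inner_lt_1_if_unit_neq \<open>sgn (grad z) \<noteq> sgn u\<close>
      by (simp_all add: dot_square_norm s_def v_def g_def)
    moreover have "g \<bullet> w = (norm g *\<^sub>R s) \<bullet> w" "u \<bullet> w = (norm u *\<^sub>R v) \<bullet> w"
      by (simp_all only: s_def v_def scaleR_norm_sgn)
    ultimately have "g \<bullet> w = norm g * (s \<bullet> v - 1)" "u \<bullet> w = norm u * (1 - s \<bullet> v)"
      by (simp_all add: w_def inner_diff_right inner_commute algebra_simps)
    then have "g \<bullet> w < 0" and uw: "0 < u \<bullet> w"
      using \<open>s \<bullet> v < 1\<close> \<open>g \<noteq> 0\<close> assms by (simp_all add: mult_pos_neg)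
    moreover have "((\<lambda>t. F (z + t *\<^sub>R w)) has_real_derivative g \<bullet> w) (at 0)"
      using has_real_derivative_along_line[OF has_derivative_DF, of z w 0]
      by (simp add: DF_eq_inner_grad g_def)
    ultimately obtain d where "d > 0" and "\<forall>h>0. h < d \<longrightarrow> F (z + h *\<^sub>R w) < F z"
      using DERIV_neg_dec_right by fastforce
    then have "F (z + (d / 2) *\<^sub>R w) < c"
      using F_on_M[OF \<open>z \<in> M\<close>] by simp
    then have "z + (d / 2) *\<^sub>R w \<in> K"
      using K_eq by simp
    with z_max have "u \<bullet> (z + (d / 2) *\<^sub>R w) \<le> u \<bullet> z"
      by blast
    with uw \<open>d > 0\<close> show False
      by (simp add: inner_add_right mult_le_0_iff)
  qed
  with \<open>z \<in> M\<close> show ?thesis by blast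
qed

(* The inverse Gauss map; meaningless for u = 0, where no point qualifies. *)
definition normal_point :: "'a \<Rightarrow> 'a" where
  "normal_point u = (THE n. n \<in> M \<and> sgn (grad n) = sgn u)"

lemma normal_point_iff: "n \<in> M \<and> sgn (grad n) = sgn u \<longleftrightarrow> u \<noteq> 0 \<and> n = normal_point u"
proof -
  have "normal_point u \<in> M \<and> sgn (grad (normal_point u)) = sgn u" if "u \<noteq> 0"
    using normal_point_exists[OF that] sgn_grad_inj unfolding normal_point_def
    by (smt (verit) theI)
  then show ?thesis
    using sgn_grad_inj grad_nonzero by (metis sgn_zero sgn_zero_iff)
qed

lemma normal_point_in_M: "u \<noteq> 0 \<Longrightarrow> normal_point u \<in> M"
  using normal_point_iff by blast

lemma sgn_grad_normal_point: "u \<noteq> 0 \<Longrightarrow> sgn (grad (normal_point u)) = sgn u"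
  using normal_point_iff by blast

lemma normal_point_lipschitz:
  "\<exists>L>0. \<forall>u v. u \<noteq> 0 \<longrightarrow> v \<noteq> 0 \<longrightarrow>
     norm (normal_point u - normal_point v) \<le> L * norm (u - v) / norm v"
proof -
  obtain \<kappa> where "\<kappa> > 0" and \<kappa>: "\<forall>z\<in>K. \<forall>h. \<kappa> * (norm h)\<^sup>2 \<le> D2F z h h"
    using hessian_coercive by blast
  obtain A where "A > 0" and A: "\<forall>q\<in>M. norm (grad q) \<le> A"
    using grad_bounded by blast
  have "norm (normal_point u - normal_point v) \<le> 2 * A / \<kappa> * norm (u - v) / norm v"
    if "u \<noteq> 0" "v \<noteq> 0" for u v
  proof -
    have "\<kappa> * norm (normal_point u - normal_point v) \<le> A * norm (sgn u - sgn v)"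
      using normal_dist_le[OF \<kappa> A] normal_point_in_M sgn_grad_normal_point that by metis
    also have "\<dots> \<le> A * (2 * norm (u - v) / norm v)"
      using norm_sgn_diff_le[OF that(2), of u] \<open>A > 0\<close> by (intro mult_left_mono) auto
    finally have "norm (normal_point u - normal_point v) \<le> A * (2 * norm (u - v) / norm v) / \<kappa>"
      by (subst pos_le_divide_eq[OF \<open>\<kappa> > 0\<close>]) (simp only: mult.commute)
    then show ?thesis
      by (simp add: mult_ac)
  qed
  moreover have "2 * A / \<kappa> > 0"
    using \<open>\<kappa> > 0\<close> \<open>A > 0\<close> by simp
  ultimately show ?thesis by blast
qed

end

lemma cJ_cJ [simp]: "cJ (cJ z) = - z"
  by (simp add: cJ_def prod_eq_iff)

lemma inner_cJ_cJ [simp]: "cJ a \<bullet> cJ b = a \<bullet> b"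
  by (simp add: cJ_def inner_prod_def add.commute)

lemma inner_cJ_left: "cJ a \<bullet> b = - (a \<bullet> cJ b)"
  by (simp add: cJ_def inner_prod_def)

lemma norm_cJ [simp]: "norm (cJ z) = norm z"
  by (simp add: norm_eq_sqrt_inner)

lemma cJ_eq_0_iff [simp]: "cJ z = 0 \<longleftrightarrow> z = 0"
  by (metis norm_cJ norm_eq_zero)

lemma cJ_minus [simp]: "cJ (- a) = - cJ a"
  by (simp add: cJ_def)

lemma cJ_scaleR [simp]: "cJ (r *\<^sub>R a) = r *\<^sub>R cJ a"
  by (simp add: cJ_def)

lemma cJ_diff: "cJ (a - b) = cJ a - cJ b"
  by (simp add: cJ_def)

lemma cJ_eq_iff: "cJ a = b \<longleftrightarrow> a = - cJ b"
  by auto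

lemma sgn_cJ: "sgn (cJ z) = cJ (sgn z)"
  by (simp add: sgn_div_norm)

lemma pos_parallel_sym: "pos_parallel a b \<Longrightarrow> pos_parallel b a"
proof -
  assume "pos_parallel a b"
  then obtain l where "l > 0" "a = l *\<^sub>R b"
    unfolding pos_parallel_def by blast
  then have "b = (1 / l) *\<^sub>R a"
    by simp
  with \<open>l > 0\<close> show "pos_parallel b a"
    unfolding pos_parallel_def by (intro exI[of _ "1 / l"]) simp
qed

lemma pos_parallel_commute: "pos_parallel a b \<longleftrightarrow> pos_parallel b a"
  using pos_parallel_sym by blast

lemma pos_parallel_iff_sgn_eq:
  assumes "a \<noteq> 0"
  shows "pos_parallel a b \<longleftrightarrow> sgn a = sgn b"
proof
  assume "pos_parallel a b"
  then obtain l where "l > 0" "a = l *\<^sub>R b"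
    unfolding pos_parallel_def by blast
  then show "sgn a = sgn b"
    by (simp add: sgn_scaleR)
next
  assume sgn_eq: "sgn a = sgn b"
  then have "b \<noteq> 0"
    using assms by (metis sgn_zero_iff)
  have "a = norm a *\<^sub>R sgn b"
    using sgn_eq scaleR_norm_sgn by metis
  also have "\<dots> = (norm a / norm b) *\<^sub>R b"
    by (simp add: sgn_div_norm divide_inverse_commute)
  finally show "pos_parallel a b"
    unfolding pos_parallel_def using assms \<open>b \<noteq> 0\<close>
    by (intro exI[of _ "norm a / norm b"]) simp
qed

lemma scaleR_if_orthogonal_to_hyperplane:
  fixes g s :: "'a::real_inner"
  assumes "g \<noteq> 0" and orth: "\<And>v. g \<bullet> v = 0 \<Longrightarrow> s \<bullet> v = 0"
  shows "s = (s \<bullet> g / (g \<bullet> g)) *\<^sub>R g"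
proof -
  define \<mu> where "\<mu> = s \<bullet> g / (g \<bullet> g)"
  define v where "v = s - \<mu> *\<^sub>R g"
  have "g \<bullet> v = 0"
    using assms(1) by (simp add: v_def \<mu>_def inner_diff_right inner_commute)
  have "v \<bullet> v = (s - \<mu> *\<^sub>R g) \<bullet> v"
    by (simp only: v_def[symmetric])
  also have "\<dots> = 0"
    using orth \<open>g \<bullet> v = 0\<close> by (simp add: inner_diff_left)
  finally show ?thesis
    by (simp add: v_def \<mu>_def)
qed

locale convex_hypersurface = convex_level_set F c M K
  for F :: "'n::finite sp \<Rightarrow> real" and c M K
begin

lemma reeb_eq:
  assumes "q \<in> M"
  shows "reeb F q = (1 / (q \<bullet> grad q)) *\<^sub>R cJ (grad q)"
proof -
  define g where "g = grad q"
  have "0 < q \<bullet> g"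
    using inner_grad_pos[OF assms] by (simp add: g_def)
  then have "g \<noteq> 0"
    by auto
  have tangent: "tangent_space F q = {v. g \<bullet> v = 0}"
    unfolding tangent_space_def DF_def[symmetric] DF_eq_inner_grad g_def ..
  show ?thesis
    unfolding reeb_def tangent g_def[symmetric]
  proof (rule the_equality)
    show "(\<forall>v\<in>{v. g \<bullet> v = 0}. omega v ((1 / (q \<bullet> g)) *\<^sub>R cJ g) = 0) \<and>
        omega q ((1 / (q \<bullet> g)) *\<^sub>R cJ g) = 1"
      using \<open>0 < q \<bullet> g\<close> by (simp add: omega_def inner_commute)
  next
    fix r
    assume r: "(\<forall>v\<in>{v. g \<bullet> v = 0}. omega v r = 0) \<and> omega q r = 1"
    define \<mu> where "\<mu> = cJ r \<bullet> g / (g \<bullet> g)"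
    have "cJ r = \<mu> *\<^sub>R g"
      unfolding \<mu>_def using \<open>g \<noteq> 0\<close>
    proof (rule scaleR_if_orthogonal_to_hyperplane)
      show "cJ r \<bullet> v = 0" if "g \<bullet> v = 0" for v
      proof -
        have "omega v r = 0"
          using r that by blast
        then show ?thesis
          by (simp add: omega_def inner_cJ_left[of v r] inner_commute[of "cJ r" v])
      qed
    qed
    moreover have "omega q r = - (q \<bullet> cJ r)"
      by (simp add: omega_def inner_cJ_left)
    ultimately have "\<mu> = - 1 / (q \<bullet> g)"
      using r \<open>0 < q \<bullet> g\<close> by (simp add: field_simps)
    then show "r = (1 / (q \<bullet> g)) *\<^sub>R cJ g"
      using \<open>cJ r = \<mu> *\<^sub>R g\<close> by (simp add: cJ_eq_iff)
  qed
qed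

lemma pos_parallel_reeb_iff:
  assumes "q \<in> M"
  shows "pos_parallel (reeb F q) v \<longleftrightarrow> sgn (grad q) = sgn (- cJ v)"
proof -
  have "0 < q \<bullet> grad q"
    using inner_grad_pos[OF assms] .
  then have "reeb F q \<noteq> 0" "sgn (reeb F q) = cJ (sgn (grad q))"
    using reeb_eq[OF assms] by (auto simp: sgn_scaleR sgn_cJ)
  then show ?thesis
    by (simp add: pos_parallel_iff_sgn_eq cJ_eq_iff sgn_minus sgn_cJ)
qed

lemma reeb_condition_iff:
  "n \<in> M \<and> pos_parallel (reeb F n) v \<longleftrightarrow> v \<noteq> 0 \<and> n = normal_point (- cJ v)"
proof -
  have "n \<in> M \<and> pos_parallel (reeb F n) v \<longleftrightarrow> n \<in> M \<and> sgn (grad n) = sgn (- cJ v)"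
    using pos_parallel_reeb_iff by blast
  then show ?thesis
    by (simp add: normal_point_iff)
qed

lemma n_minus_eq: "x \<noteq> 0 \<Longrightarrow> n_minus F M x = normal_point (cJ x)"
  unfolding n_minus_def reeb_condition_iff by simp

lemma n_plus_eq: "x \<noteq> 0 \<Longrightarrow> n_plus F M x = normal_point (- cJ x)"
  unfolding n_plus_def reeb_condition_iff by simp

lemma m_minus_condition_iff:
  "m \<in> M \<and> pos_parallel (m - x) (reeb F m) \<longleftrightarrow> x \<noteq> m \<and> normal_point (cJ (x - m)) = m"
proof -
  have "m \<in> M \<and> pos_parallel (m - x) (reeb F m) \<longleftrightarrow> m \<in> M \<and> pos_parallel (reeb F m) (m - x)"
    using pos_parallel_commute by blast
  also have "\<dots> \<longleftrightarrow> m - x \<noteq> 0 \<and> m = normal_point (- cJ (m - x))"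
    by (rule reeb_condition_iff)
  also have "\<dots> \<longleftrightarrow> x \<noteq> m \<and> normal_point (cJ (x - m)) = m"
    by (auto simp: cJ_diff)
  finally show ?thesis .
qed

lemma m_minus_eq_fixed_point:
  assumes "x \<notin> K" "m \<in> K" "normal_point (cJ (x - m)) = m"
    and unique: "\<And>z. z \<in> K \<Longrightarrow> normal_point (cJ (x - z)) = z \<Longrightarrow> z = m"
  shows "m_minus F M x = m"
  unfolding m_minus_def m_minus_condition_iff
proof (rule the_equality)
  show "x \<noteq> m \<and> normal_point (cJ (x - m)) = m"
    using assms(1-3) by auto
next
  fix z
  assume "x \<noteq> z \<and> normal_point (cJ (x - z)) = z"
  then show "z = m"
    using unique normal_point_in_M M_subset_K by (metis cJ_eq_0_iff right_minus_eq subsetD)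
qed

lemma normal_point_contraction:
  assumes lip: "\<forall>u v. u \<noteq> 0 \<longrightarrow> v \<noteq> 0 \<longrightarrow>
      norm (normal_point u - normal_point v) \<le> L * norm (u - v) / norm v"
    and "L > 0" and far: "2 * L \<le> norm (x - z1)" "2 * L \<le> norm (x - z2)"
  shows "dist (normal_point (cJ (x - z1))) (normal_point (cJ (x - z2))) \<le> 1 / 2 * dist z1 z2"
proof -
  have "x - z1 \<noteq> 0" "x - z2 \<noteq> 0"
    using far \<open>L > 0\<close> by auto
  then have "dist (normal_point (cJ (x - z1))) (normal_point (cJ (x - z2)))
      \<le> L * norm (cJ (x - z1) - cJ (x - z2)) / norm (cJ (x - z2))"
    unfolding dist_norm using lip cJ_eq_0_iff by blast
  also have "\<dots> = L * dist z1 z2 / norm (x - z2)"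
    by (simp add: dist_norm norm_minus_commute flip: cJ_diff)
  also have "\<dots> \<le> L * dist z1 z2 / (2 * L)"
    using far(2) \<open>L > 0\<close> by (intro divide_left_mono mult_pos_pos) auto
  also have "\<dots> = 1 / 2 * dist z1 z2"
    using \<open>L > 0\<close> by simp
  finally show ?thesis .
qed

lemma m_minus_fixed_point:
  "\<exists>X. \<forall>x. X \<le> norm x \<longrightarrow>
     m_minus F M x \<in> M \<and> normal_point (cJ (x - m_minus F M x)) = m_minus F M x"
proof -
  obtain L where "L > 0" and lip: "\<forall>u v. u \<noteq> 0 \<longrightarrow> v \<noteq> 0 \<longrightarrow>
      norm (normal_point u - normal_point v) \<le> L * norm (u - v) / norm v"
    using normal_point_lipschitz by blast
  obtain R where R: "\<forall>z\<in>K. norm z \<le> R"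
    using compact_imp_bounded[OF compact_K] bounded_pos by blast
  have "m_minus F M x \<in> M \<and> normal_point (cJ (x - m_minus F M x)) = m_minus F M x"
    if x: "R + 2 * L \<le> norm x" for x
  proof -
    define \<Phi> where "\<Phi> z = normal_point (cJ (x - z))" for z
    have far: "2 * L \<le> norm (x - z)" if "z \<in> K" for z
      using R that x norm_triangle_ineq2[of x z] by fastforce
    then have "x \<notin> K"
      using \<open>L > 0\<close> by fastforce
    have \<Phi>_M: "\<Phi> z \<in> M" if "z \<in> K" for z
    proof -
      have "x - z \<noteq> 0"
        using far[OF that] \<open>L > 0\<close> by auto
      then show ?thesis
        unfolding \<Phi>_def by (intro normal_point_in_M) simp
    qed
    obtain m where "m \<in> K" "\<Phi> m = m" and unique: "\<And>z. z \<in> K \<Longrightarrow> \<Phi> z = z \<Longrightarrow> z = m"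
    proof -
      have "\<exists>!m\<in>K. \<Phi> m = m"
      proof (rule Banach_fix)
        show "complete K" "K \<noteq> {}" "(0::real) \<le> 1 / 2" "(1::real) / 2 < 1"
          using compact_imp_complete[OF compact_K] zero_in_K by auto
        show "\<Phi> ` K \<subseteq> K"
          using \<Phi>_M M_subset_K by blast
        show "dist (\<Phi> z1) (\<Phi> z2) \<le> 1 / 2 * dist z1 z2" if "z1 \<in> K" "z2 \<in> K" for z1 z2
          unfolding \<Phi>_def using normal_point_contraction[OF lip \<open>L > 0\<close> far far] that by blast
      qed
      then show ?thesis
        by (elim ex1E) (metis that)
    qed
    have "m_minus F M x = m"
      using \<open>x \<notin> K\<close> \<open>m \<in> K\<close> \<open>\<Phi> m = m\<close> unique unfolding \<Phi>_def
      by (rule m_minus_eq_fixed_point)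
    then show ?thesis
      using \<Phi>_M[OF \<open>m \<in> K\<close>] \<open>\<Phi> m = m\<close> by (simp add: \<Phi>_def)
  qed
  then show ?thesis
    by blast
qed

lemma normal_point_cJ_shift_le:
  assumes lip: "\<forall>u v. u \<noteq> 0 \<longrightarrow> v \<noteq> 0 \<longrightarrow>
      norm (normal_point u - normal_point v) \<le> L * norm (u - v) / norm v"
    and "0 \<le> L" "norm b \<le> r" "0 < s" "s \<le> norm a" "a \<noteq> b"
  shows "norm (normal_point (cJ (a - b)) - normal_point (cJ a)) \<le> L * r / s"
proof -
  have "cJ a \<noteq> 0" "cJ (a - b) \<noteq> 0"
    using assms(4-6) by auto
  then have "norm (normal_point (cJ (a - b)) - normal_point (cJ a))
      \<le> L * norm (cJ (a - b) - cJ a) / norm (cJ a)"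
    using lip by blast
  also have "\<dots> = L * norm b / norm a"
    by (simp add: cJ_diff)
  also have "\<dots> \<le> L * r / s"
    using assms(2-5) order_trans[OF norm_ge_zero assms(3)]
    by (intro frac_le mult_left_mono mult_nonneg_nonneg) auto
  finally show ?thesis .
qed

lemma norm_Tbil_ge:
  assumes "norm (m_minus F M x) \<le> R"
  shows "norm x - 2 * R \<le> norm (Tbil F M x)"
proof -
  have "norm x \<le> norm (2 *\<^sub>R m_minus F M x) + norm (Tbil F M x)"
    using norm_triangle_ineq4[of "2 *\<^sub>R m_minus F M x" "Tbil F M x"] by (simp add: Tbil_def)
  with assms show ?thesis
    by simp
qed

lemma Tbil_step_estimates:
  assumes lip: "\<forall>u v. u \<noteq> 0 \<longrightarrow> v \<noteq> 0 \<longrightarrow>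
      norm (normal_point u - normal_point v) \<le> L * norm (u - v) / norm v"
    and "0 \<le> L" and R: "\<And>z. z \<in> M \<Longrightarrow> norm z \<le> R" and "4 * R < norm x"
    and fixed_x: "m_minus F M x \<in> M" "normal_point (cJ (x - m_minus F M x)) = m_minus F M x"
    and fixed_y: "m_minus F M (Tbil F M x) \<in> M"
      "normal_point (cJ (Tbil F M x - m_minus F M (Tbil F M x))) = m_minus F M (Tbil F M x)"
  shows "norm (n_minus F M x - m_minus F M x) \<le> 4 * L * R / norm x \<and>
    norm (m_minus F M (Tbil F M x) - n_minus F M (Tbil F M x)) \<le> 4 * L * R / norm x \<and>
    norm (n_minus F M (Tbil F M x) - n_plus F M x) \<le> 4 * L * R / norm x"
proof -
  define m y where "m = m_minus F M x" and "y = Tbil F M x"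
  define m' where "m' = m_minus F M y"
  have "norm m \<le> R" "norm m' \<le> R"
    using R fixed_x fixed_y by (simp_all add: m_def m'_def y_def)
  moreover have "0 \<le> R"
    using \<open>norm m \<le> R\<close> norm_ge_zero order_trans by blast
  moreover have "norm x - 2 * R \<le> norm y"
    using norm_Tbil_ge \<open>norm m \<le> R\<close> by (simp add: m_def y_def)
  ultimately have "0 < norm x / 2" "norm x / 2 \<le> norm y"
    "x \<noteq> 0" "y \<noteq> 0" "x \<noteq> m" "y \<noteq> m'" "- x \<noteq> - (2 *\<^sub>R m)"
    using \<open>4 * R < norm x\<close> by auto
  have "L * (2 * R) / (norm x / 2) = 4 * L * R / norm x"
    by simp
  moreover have "norm (n_minus F M x - m) \<le> L * (2 * R) / (norm x / 2)"
    using normal_point_cJ_shift_le[OF lip \<open>0 \<le> L\<close>, of m "2 * R" "norm x / 2" x] fixed_x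
      \<open>0 \<le> R\<close> \<open>norm m \<le> R\<close> \<open>0 < norm x / 2\<close> \<open>x \<noteq> 0\<close> \<open>x \<noteq> m\<close>
    by (simp add: n_minus_eq norm_minus_commute m_def)
  moreover have "norm (m' - n_minus F M y) \<le> L * (2 * R) / (norm x / 2)"
    using normal_point_cJ_shift_le[OF lip \<open>0 \<le> L\<close>, of m' "2 * R" "norm x / 2" y] fixed_y
      \<open>0 \<le> R\<close> \<open>norm m' \<le> R\<close> \<open>0 < norm x / 2\<close> \<open>norm x / 2 \<le> norm y\<close>
      \<open>y \<noteq> 0\<close> \<open>y \<noteq> m'\<close>
    by (simp add: n_minus_eq m'_def y_def)
  moreover have "norm (n_minus F M y - n_plus F M x) \<le> L * (2 * R) / (norm x / 2)"
    using normal_point_cJ_shift_le[OF lip \<open>0 \<le> L\<close>, of "- (2 *\<^sub>R m)" "2 * R" "norm x / 2" "- x"]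
      \<open>norm m \<le> R\<close> \<open>0 < norm x / 2\<close> \<open>x \<noteq> 0\<close> \<open>y \<noteq> 0\<close> \<open>- x \<noteq> - (2 *\<^sub>R m)\<close>
    by (simp add: n_minus_eq n_plus_eq y_def Tbil_def m_def)
  ultimately show ?thesis
    by (simp add: m_def y_def m'_def)
qed

lemma Tbil_estimates:
  "\<exists>C X. C > 0 \<and> X > 0 \<and> (\<forall>x. X \<le> norm x \<longrightarrow>
     norm (n_minus F M x - m_minus F M x) \<le> C / norm x \<and>
     norm (m_minus F M (Tbil F M x) - n_minus F M (Tbil F M x)) \<le> C / norm x \<and>
     norm (n_minus F M (Tbil F M x) - n_plus F M x) \<le> C / norm x)"
proof -
  obtain L where "L > 0" and lip: "\<forall>u v. u \<noteq> 0 \<longrightarrow> v \<noteq> 0 \<longrightarrow>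
      norm (normal_point u - normal_point v) \<le> L * norm (u - v) / norm v"
    using normal_point_lipschitz by blast
  obtain R where "R > 0" and R: "\<And>z. z \<in> M \<Longrightarrow> norm z \<le> R"
    using compact_imp_bounded[OF compact_K] bounded_pos M_subset_K by (metis subsetD)
  obtain X0 where X0: "\<And>x. X0 \<le> norm x \<Longrightarrow>
      m_minus F M x \<in> M \<and> normal_point (cJ (x - m_minus F M x)) = m_minus F M x"
    using m_minus_fixed_point by blast
  define X where "X = max X0 0 + 4 * R + 1"
  have "X0 \<le> norm (Tbil F M x)" if "X \<le> norm x" for x
  proof -
    have "norm (m_minus F M x) \<le> R"
      using X0 R that max.cobounded1[of X0 0] \<open>R > 0\<close> by (simp add: X_def)
    then show ?thesis
      using norm_Tbil_ge that max.cobounded1[of X0 0] \<open>R > 0\<close> by (smt (verit) X_def)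
  qed
  then have "\<forall>x. X \<le> norm x \<longrightarrow>
     norm (n_minus F M x - m_minus F M x) \<le> 4 * L * R / norm x \<and>
     norm (m_minus F M (Tbil F M x) - n_minus F M (Tbil F M x)) \<le> 4 * L * R / norm x \<and>
     norm (n_minus F M (Tbil F M x) - n_plus F M x) \<le> 4 * L * R / norm x"
    using X0 \<open>R > 0\<close> max.cobounded1[of X0 0] max.cobounded2[of 0 X0] \<open>L > 0\<close>
    by (intro allI impI Tbil_step_estimates[OF lip _ R]) (auto simp: X_def)
  moreover have "4 * L * R > 0" "X > 0"
    using \<open>L > 0\<close> \<open>R > 0\<close> by (auto simp: X_def)
  ultimately show ?thesis
    by blast
qed

end

theorem lemma3p2:
  fixes F :: "'n::finite sp \<Rightarrow> real" and c :: real and M K :: "'n sp set"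
  assumes "smooth F"
    and "pos_def_hessian F"
    and "M = {z. F z = c}"
    and "K = {z. F z \<le> c}"
    and "compact K" and "convex K" and "0 \<in> interior K"
    and "M = frontier K"
  shows "\<exists>C \<delta>. C > 0 \<and> \<delta> > 0 \<and>
    (\<forall>x. norm x \<ge> 1 / \<delta> \<longrightarrow>
      (let y = Tbil F M x in
        norm (n_minus F M x - m_minus F M x) \<le> C / norm x \<and>
        norm (m_minus F M y - n_minus F M y) \<le> C / norm x \<and>
        norm (n_minus F M y - n_plus F M x) \<le> C / norm x))"
proof -
  interpret convex_hypersurface F c M K
    by unfold_locales (fact assms)+
  obtain C X where "C > 0" "X > 0" and estimates: "\<forall>x. X \<le> norm x \<longrightarrow>
      norm (n_minus F M x - m_minus F M x) \<le> C / norm x \<and>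
      norm (m_minus F M (Tbil F M x) - n_minus F M (Tbil F M x)) \<le> C / norm x \<and>
      norm (n_minus F M (Tbil F M x) - n_plus F M x) \<le> C / norm x"
    using Tbil_estimates by blast
  show ?thesis
    using \<open>C > 0\<close> \<open>X > 0\<close> estimates by (intro exI[of _ C] exI[of _ "1 / X"]) (simp add: Let_def)
qed

end
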